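(* There exists $N$ such that for every integer $n\ge N$ there is a tree $T$ on $n$ vertices with the following property: for every (deterministic) strategy of the cat in the Cat and Mouse game on $T$, there is a sequence of mouse positions $(m_i)_{i\ge1}$ such that $\mathrm{rad}_T(M_i)>\sqrt{n}/12$ for every $i\ge1$; that is, the mouse avoids being localised up to distance $\sqrt{n}/12$ forever.
   Context: The Cat and Mouse game is played on a simple, undirected, connected graph $G$ with $n$ vertices, in discrete time steps $i=1,2,\dots$. The mouse occupies vertices $m_1,m_2,\dots$, where for $i\ge2$, $m_i$ equals $m_{i-1}$ or is a neighbour of $m_{i-1}$. At time $i$ the cat chooses (tests) an arbitrary vertex $c_i$. For $i\ge2$ the cat is told $b_i=1$ if $d(c_i,m_i)\le d(c_{i-1},m_{i-1})$ and $b_i=0$ otherwise, where $d$ is the graph distance. A strategy of the cat is a triple $(c_1,c_2,f)$ with $c_1,c_2\in V(G)$ and $f:\bigcup_{i\in\mathbb N}\{0,1\}^i\to V(G)$, meaning $c_i=f(b_2,\dots,b_{i-1})$ for $i\ge3$; it is fixed in advance and deterministic, and the mouse knows it (so the mouse's sequence may depend on it). $M_i$ is the set of vertices $v$ for which there exist $\tilde m_1,\dots,\tilde m_i$ with $\tilde m_i=v$, $\tilde m_j$ in the closed neighbourhood of $\tilde m_{j-1}$ for $2\le j\le i$, and for each $2\le j\le i$: $d(c_j,\tilde m_j)\le d(c_{j-1},\tilde m_{j-1})$ iff $b_j=1$. The radius of $W\subseteq V(G)$ is $\mathrm{rad}_G(W)=\min_{v\in V(G)}\max_{w\in W} d(v,w)$.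 *)

theory Defs
  imports Complex_Main
begin

definition simple_graph :: "'a set \<Rightarrow> ('a \<Rightarrow> 'a \<Rightarrow> bool) \<Rightarrow> bool" where
  "simple_graph V E \<longleftrightarrow> finite V \<and> (\<forall>u v. E u v \<longrightarrow> u \<in> V \<and> v \<in> V)
     \<and> (\<forall>u v. E u v \<longrightarrow> E v u) \<and> (\<forall>u. \<not> E u u)"

definition connected_graph :: "'a set \<Rightarrow> ('a \<Rightarrow> 'a \<Rightarrow> bool) \<Rightarrow> bool" where
  "connected_graph V E \<longleftrightarrow> (\<forall>u\<in>V. \<forall>v\<in>V. \<exists>k. (E ^^ k) u v)"

definition has_cycle :: "('a \<Rightarrow> 'a \<Rightarrow> bool) \<Rightarrow> bool" where
  "has_cycle E \<longleftrightarrow> (\<exists>p. length p \<ge> 3 \<and> distinct p \<and>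
      (\<forall>i. Suc i < length p \<longrightarrow> E (p ! i) (p ! Suc i)) \<and> E (last p) (hd p))"

definition is_tree :: "'a set \<Rightarrow> ('a \<Rightarrow> 'a \<Rightarrow> bool) \<Rightarrow> bool" where
  "is_tree V E \<longleftrightarrow> V \<noteq> {} \<and> simple_graph V E \<and> connected_graph V E \<and> \<not> has_cycle E"

definition gdist :: "('a \<Rightarrow> 'a \<Rightarrow> bool) \<Rightarrow> 'a \<Rightarrow> 'a \<Rightarrow> nat" where
  "gdist E u v = (LEAST k. (E ^^ k) u v)"

definition grad :: "'a set \<Rightarrow> ('a \<Rightarrow> 'a \<Rightarrow> bool) \<Rightarrow> 'a set \<Rightarrow> nat" where
  "grad V E W = Min ((\<lambda>v. Max ((\<lambda>w. gdist E v w) ` W)) ` V)"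

text \<open>Cat strategy (c1, c2, f). Position of the cat at time i, given the answer history
  h = [b_2, ..., b_{i-1}].\<close>
definition cat_at :: "'a \<Rightarrow> 'a \<Rightarrow> (bool list \<Rightarrow> 'a) \<Rightarrow> nat \<Rightarrow> bool list \<Rightarrow> 'a" where
  "cat_at c1 c2 f i h = (if i \<le> 1 then c1 else if i = 2 then c2 else f h)"

text \<open>Answer history up to time k: hist k = [b_2, ..., b_k] (times are 1-based).\<close>
fun hist :: "('a \<Rightarrow> 'a \<Rightarrow> bool) \<Rightarrow> 'a \<Rightarrow> 'a \<Rightarrow> (bool list \<Rightarrow> 'a) \<Rightarrow> (nat \<Rightarrow> 'a) \<Rightarrow> nat \<Rightarrow> bool list" where
  "hist E c1 c2 f m 0 = []"
| "hist E c1 c2 f m (Suc 0) = []"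
| "hist E c1 c2 f m (Suc (Suc k)) =
     hist E c1 c2 f m (Suc k) @
       [gdist E (cat_at c1 c2 f (Suc (Suc k)) (hist E c1 c2 f m (Suc k))) (m (Suc (Suc k)))
        \<le> gdist E (cat_at c1 c2 f (Suc k) (hist E c1 c2 f m k)) (m (Suc k))]"

definition catpos :: "('a \<Rightarrow> 'a \<Rightarrow> bool) \<Rightarrow> 'a \<Rightarrow> 'a \<Rightarrow> (bool list \<Rightarrow> 'a) \<Rightarrow> (nat \<Rightarrow> 'a) \<Rightarrow> nat \<Rightarrow> 'a" where
  "catpos E c1 c2 f m i = cat_at c1 c2 f i (hist E c1 c2 f m (i - 1))"

definition answer :: "('a \<Rightarrow> 'a \<Rightarrow> bool) \<Rightarrow> 'a \<Rightarrow> 'a \<Rightarrow> (bool list \<Rightarrow> 'a) \<Rightarrow> (nat \<Rightarrow> 'a) \<Rightarrow> nat \<Rightarrow> bool" where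
  "answer E c1 c2 f m i \<longleftrightarrow>
     gdist E (catpos E c1 c2 f m i) (m i) \<le> gdist E (catpos E c1 c2 f m (i - 1)) (m (i - 1))"

definition mouse_seq :: "'a set \<Rightarrow> ('a \<Rightarrow> 'a \<Rightarrow> bool) \<Rightarrow> (nat \<Rightarrow> 'a) \<Rightarrow> bool" where
  "mouse_seq V E m \<longleftrightarrow> (\<forall>i\<ge>1. m i \<in> V) \<and>
     (\<forall>i\<ge>2. m i = m (i - 1) \<or> E (m (i - 1)) (m i))"

text \<open>M_i: vertices consistent with the answers b_2..b_i, given the cat's tests c_1..c_i.\<close>
definition Mset :: "'a set \<Rightarrow> ('a \<Rightarrow> 'a \<Rightarrow> bool) \<Rightarrow> 'a \<Rightarrow> 'a \<Rightarrow> (bool list \<Rightarrow> 'a) \<Rightarrow> (nat \<Rightarrow> 'a) \<Rightarrow> nat \<Rightarrow> 'a set" where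
  "Mset V E c1 c2 f m i = {v. \<exists>m'. m' i = v \<and> (\<forall>j\<in>{1..i}. m' j \<in> V) \<and>
     (\<forall>j\<in>{2..i}. (m' j = m' (j - 1) \<or> E (m' (j - 1)) (m' j)) \<and>
        ((gdist E (catpos E c1 c2 f m j) (m' j) \<le> gdist E (catpos E c1 c2 f m (j - 1)) (m' (j - 1)))
          \<longleftrightarrow> answer E c1 c2 f m j))}"

end

theory Submission
  imports Defs
begin

text \<open>
  The tree is a spider: a centre with \<open>2K\<close> legs of length at least \<open>T\<close>, where \<open>T\<close> is
  about \<open>\<surd>n / 6\<close> and \<open>K > 8T + 4\<close>. The mouse is shadowed by a phantom mouse on a disjoint set
  of legs. As long as neither is on the leg of the tested vertex, its distance to the cat is the
  cat's depth plus its own depth, so the answer only depends on how the two depths change; the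
  two depths are moved in lockstep (the twin walk) so that every answer is the same for both
  mice, which keeps both in \<open>M\<^sub>i\<close>. The twin walk keeps the sum of the depths at least \<open>T - 1\<close>,
  so the mice are at distance at least \<open>T - 1\<close> and \<open>M\<^sub>i\<close> has radius at least \<open>(T - 1) / 2\<close>.
  Legs are only changed at the centre: the twin walk brings each mouse there once every
  \<open>4(2T + 1)\<close> steps, and since the cat's strategy is known, the mouse can pick a leg that the
  cat will not test before its next visit to the centre.
\<close>

section \<open>Distances and localisation in graphs\<close>

lemma gdist_eqI:
  assumes sym: "\<And>u v. E u v \<Longrightarrow> E v u"
    and D_refl: "\<And>u. D u u = 0"
    and D_step: "\<And>u w v. E w v \<Longrightarrow> D u v \<le> D u w + 1"
    and D_eq_0: "\<And>u v. u \<in> V \<Longrightarrow> v \<in> V \<Longrightarrow> D u v = 0 \<Longrightarrow> u = v"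
    and descent: "\<And>u v. u \<in> V \<Longrightarrow> v \<in> V \<Longrightarrow> u \<noteq> v \<Longrightarrow>
       \<exists>w\<in>V. E w v \<and> D u w + 1 = D u v \<or> E u w \<and> D w v + 1 = D u v"
    and "u \<in> V" "v \<in> V"
  shows "(E ^^ D u v) u v" and "gdist E u v = D u v"
proof -
  have lower: "D u v \<le> j" if "(E ^^ j) u v" for j v
    using that
  proof (induction j arbitrary: v)
    case (Suc j)
    from Suc.prems obtain w where "(E ^^ j) u w" "E w v" by (rule relpowp_Suc_E)
    with Suc.IH D_step[of w v u] show ?case by fastforce
  qed (simp add: D_refl)
  have upper: "(E ^^ D u v) u v" if "u \<in> V" "v \<in> V" for u v
    using that
  proof (induction "D u v" arbitrary: u v)
    case 0
    then show ?case using D_eq_0 by simp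
  next
    case (Suc d)
    then obtain w where "w \<in> V" and "E w v \<and> D u w = d \<or> E u w \<and> D w v = d"
      using descent[of u v] D_refl by (metis add_right_cancel Suc_eq_plus1 nat.distinct(1))
    then show ?case
      using Suc.hyps(1) Suc.hyps(2)[symmetric] Suc.prems
      by (metis relpowp_Suc_I relpowp_Suc_I2)
  qed
  show "(E ^^ D u v) u v" using upper[OF assms(6,7)] .
  then show "gdist E u v = D u v"
    unfolding gdist_def using lower by (intro Least_equality)
qed

lemma no_cycle_if_parent:
  fixes E :: "'a::linorder \<Rightarrow> 'a \<Rightarrow> bool"
  assumes sym: "\<And>u v. E u v \<Longrightarrow> E v u" and parent: "\<And>u v. E u v \<Longrightarrow> u < v \<Longrightarrow> u = p v"
  shows "\<not> has_cycle E"
proof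
  assume "has_cycle E"
  then obtain cs where len: "3 \<le> length cs" and "distinct cs"
    and path: "\<And>j. Suc j < length cs \<Longrightarrow> E (cs ! j) (cs ! Suc j)" and closing: "E (last cs) (hd cs)"
    unfolding has_cycle_def by blast
  define L where "L = length cs"
  define succ where "succ j = (if Suc j = L then 0 else Suc j)" for j
  have adj: "E (cs ! j) (cs ! succ j)" if "j < L" for j
  proof (cases "Suc j = L")
    case True
    then have "j = L - 1" by simp
    moreover have "cs \<noteq> []" using len by auto
    ultimately show ?thesis
      using closing unfolding L_def succ_def by (simp add: hd_conv_nth last_conv_nth)
  next
    case False
    then show ?thesis using path that unfolding L_def succ_def by simp
  qed
  obtain i where i: "i < L" "cs ! i = Max (set cs)"
    using len unfolding L_def
    by (metis Max_in List.finite_set in_set_conv_nth list.size(3) not_numeral_le_zero set_empty)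
  define a where "a = (if i = 0 then L - 1 else i - 1)"
  have idx: "a < L" "succ i < L" "succ a = i" "a \<noteq> i" "succ i \<noteq> i" "a \<noteq> succ i"
    using i len unfolding a_def succ_def L_def by auto
  have distinct_at: "cs ! x \<noteq> cs ! y" if "x < L" "y < L" "x \<noteq> y" for x y
    using \<open>distinct cs\<close> that unfolding L_def by (simp add: nth_eq_iff_index_eq)
  have below_max: "cs ! x < cs ! i" if "x < L" "x \<noteq> i" for x
    using distinct_at[OF that(1) i(1) that(2)] i(2) that(1) unfolding L_def
    by (simp add: order_le_neq_trans)
  have "cs ! a = p (cs ! i)"
    using parent adj[OF idx(1)] idx below_max by simp
  moreover have "cs ! succ i = p (cs ! i)"
    using parent sym[OF adj[OF i(1)]] idx below_max by simp
  ultimately show False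
    using distinct_at[OF idx(1,2,6)] by simp
qed

lemma Mset_subset: "1 \<le> i \<Longrightarrow> Mset V E c1 c2 f m i \<subseteq> V"
  unfolding Mset_def by auto

lemma Mset_memI:
  assumes "mouse_seq V E x"
    and "\<And>j. 2 \<le> j \<Longrightarrow>
      (gdist E (catpos E c1 c2 f m j) (x j) \<le> gdist E (catpos E c1 c2 f m (j - 1)) (x (j - 1)))
        = answer E c1 c2 f m j"
  shows "x i \<in> Mset V E c1 c2 f m i"
  unfolding Mset_def
proof (intro CollectI exI[of _ x] conjI ballI refl)
  fix j assume "j \<in> {1..i}"
  then show "x j \<in> V" using assms(1) by (simp add: mouse_seq_def)
next
  fix j assume j: "j \<in> {2..i}"
  then show "x j = x (j - 1) \<or> E (x (j - 1)) (x j)" using assms(1) by (simp add: mouse_seq_def)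
  show "(gdist E (catpos E c1 c2 f m j) (x j) \<le> gdist E (catpos E c1 c2 f m (j - 1)) (x (j - 1)))
      \<longleftrightarrow> answer E c1 c2 f m j"
    using j assms(2) by simp
qed

lemma grad_lower_bound:
  assumes "finite V" "V \<noteq> {}" "W \<subseteq> V" "x \<in> W" "y \<in> W"
    and far: "\<And>v. v \<in> V \<Longrightarrow> d \<le> gdist E v x + gdist E v y"
  shows "d \<le> 2 * grad V E W"
proof -
  define ecc where "ecc v = Max ((\<lambda>w. gdist E v w) ` W)" for v
  have "grad V E W \<in> ecc ` V"
    unfolding grad_def ecc_def using assms(1,2) by (intro Min_in) auto
  then obtain v where "v \<in> V" "grad V E W = ecc v" by blast
  moreover have "finite W" using assms(1,3) by (rule finite_subset[rotated])
  then have "gdist E v x \<le> ecc v" "gdist E v y \<le> ecc v"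
    unfolding ecc_def using assms(4,5) by (auto intro: Max_ge)
  ultimately show ?thesis using far[of v] by linarith
qed

section \<open>Spiders\<close>

text \<open>
  Vertex \<open>0\<close> is the centre; for \<open>t \<ge> 1\<close> the vertex \<open>(t - 1) k + l + 1\<close> lies on leg \<open>l\<close> at
  depth \<open>t\<close>. The parent of \<open>v\<close> is \<open>v - k\<close>, truncated subtraction sending depth one to the centre.
\<close>

definition spider_depth :: "nat \<Rightarrow> nat \<Rightarrow> nat" where
  "spider_depth k v = (if v = 0 then 0 else (v - 1) div k + 1)"

definition spider_leg :: "nat \<Rightarrow> nat \<Rightarrow> nat" where
  "spider_leg k v = (v - 1) mod k"

definition spider_vertex :: "nat \<Rightarrow> nat \<Rightarrow> nat \<Rightarrow> nat" where
  "spider_vertex k l t = (if t = 0 then 0 else (t - 1) * k + l + 1)"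

definition spider :: "nat \<Rightarrow> nat \<Rightarrow> nat \<Rightarrow> nat \<Rightarrow> bool" where
  "spider n k u v \<longleftrightarrow> u < n \<and> v < n \<and> (v \<noteq> 0 \<and> u = v - k \<or> u \<noteq> 0 \<and> v = u - k)"

abbreviation same_leg :: "nat \<Rightarrow> nat \<Rightarrow> nat \<Rightarrow> bool" where
  "same_leg k u v \<equiv> u \<noteq> 0 \<and> v \<noteq> 0 \<and> spider_leg k u = spider_leg k v"

definition spider_dist :: "nat \<Rightarrow> nat \<Rightarrow> nat \<Rightarrow> nat" where
  "spider_dist k u v =
     (if same_leg k u v
      then (if spider_depth k u \<le> spider_depth k v then spider_depth k v - spider_depth k u
            else spider_depth k u - spider_depth k v)
      else spider_depth k u + spider_depth k v)"

lemma spider_depth_eq_0_iff [simp]: "spider_depth k v = 0 \<longleftrightarrow> v = 0"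
  by (simp add: spider_depth_def)

lemma spider_depth_0 [simp]: "spider_depth k 0 = 0"
  by (simp add: spider_depth_def)

lemma spider_vertex_0 [simp]: "spider_vertex k l 0 = 0"
  by (simp add: spider_vertex_def)

lemma spider_vertex_eq_0_iff [simp]: "spider_vertex k l t = 0 \<longleftrightarrow> t = 0"
  by (simp add: spider_vertex_def)

lemma spider_dist_sym: "spider_dist k u v = spider_dist k v u"
  by (auto simp: spider_dist_def)

lemma spider_dist_self [simp]: "spider_dist k u u = 0"
  by (simp add: spider_dist_def)

lemma spider_depth_le_dist: "spider_depth k u \<le> spider_dist k u v + spider_depth k v"
  by (auto simp: spider_dist_def)

lemma spider_dist_le_add: "spider_dist k u v \<le> spider_depth k u + spider_depth k v"
  by (auto simp: spider_dist_def)

lemma spider_dist_other_leg: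
  "\<not> same_leg k u v \<Longrightarrow>
     spider_dist k u v = spider_depth k u + spider_depth k v"
  by (auto simp: spider_dist_def)

lemma spider_dist_triangle: "spider_dist k u v \<le> spider_dist k u w + spider_dist k w v"
proof (cases "same_leg k u v")
  case True
  then show ?thesis
    using spider_depth_le_dist[of k u w] spider_depth_le_dist[of k w u]
      spider_depth_le_dist[of k w v] spider_depth_le_dist[of k v w]
    by (auto simp: spider_dist_sym[of k v w] spider_dist_sym[of k w u] spider_dist_def[of k u v])
next
  case False
  then consider "\<not> same_leg k u w" | "\<not> same_leg k w v"
    by metis
  then show ?thesis
  proof cases
    case 1
    then show ?thesis
      using spider_dist_le_add[of k u v] spider_dist_other_leg[OF 1]
        spider_depth_le_dist[of k v w] spider_dist_sym[of k v w]
      by linarith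
  next
    case 2
    then show ?thesis
      using spider_dist_le_add[of k u v] spider_dist_other_leg[OF 2] spider_depth_le_dist[of k u w]
      by linarith
  qed
qed

context
  fixes k :: nat
  assumes k_pos: "0 < k"
begin

lemma spider_depth_vertex [simp]: "l < k \<Longrightarrow> spider_depth k (spider_vertex k l t) = t"
  by (simp add: spider_depth_def spider_vertex_def)

lemma spider_leg_vertex [simp]: "l < k \<Longrightarrow> t \<noteq> 0 \<Longrightarrow> spider_leg k (spider_vertex k l t) = l"
  by (simp add: spider_leg_def spider_vertex_def)

lemma spider_vertex_leg_depth: "spider_vertex k (spider_leg k v) (spider_depth k v) = v"
  by (simp add: spider_vertex_def spider_depth_def spider_leg_def)

lemma spider_depth_parent: "v \<noteq> 0 \<Longrightarrow> spider_depth k (v - k) = spider_depth k v - 1"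
  using k_pos le_div_geq[of k "v - 1"] by (cases "v \<le> k") (simp_all add: spider_depth_def)

lemma spider_leg_parent: "v - k \<noteq> 0 \<Longrightarrow> spider_leg k (v - k) = spider_leg k v"
  using le_mod_geq[of k "v - 1"] by (simp add: spider_leg_def)

lemma spider_eqI:
  assumes "spider_leg k u = spider_leg k v" "spider_depth k u = spider_depth k v"
  shows "u = v"
proof -
  have "u = spider_vertex k (spider_leg k u) (spider_depth k u)"
    by (rule spider_vertex_leg_depth[symmetric])
  also have "\<dots> = v" using assms spider_vertex_leg_depth[of v] by simp
  finally show ?thesis .
qed

lemma spider_dist_eq_0:
  assumes "spider_dist k u v = 0"
  shows "u = v"
proof (cases "same_leg k u v")
  case True
  then have "spider_depth k u = spider_depth k v"
    using assms unfolding spider_dist_def by (simp split: if_splits)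
  with True show ?thesis by (blast intro: spider_eqI)
next
  case False
  then show ?thesis using assms spider_dist_other_leg[of u v k] by simp
qed

lemma spider_depth_parent_Suc: "v \<noteq> 0 \<Longrightarrow> spider_depth k (v - k) + 1 = spider_depth k v"
  using spider_depth_parent[of v] spider_depth_eq_0_iff[of k v] by linarith

lemma spider_dist_parent_self: "v \<noteq> 0 \<Longrightarrow> spider_dist k (v - k) v = 1"
  using spider_depth_parent_Suc[of v] spider_leg_parent[of v]
  by (cases "v - k = 0") (simp_all add: spider_dist_def)

lemma spider_dist_parent:
  assumes "v \<noteq> 0" "spider_depth k u \<le> spider_depth k v" "u \<noteq> v"
  shows "spider_dist k u (v - k) + 1 = spider_dist k u v"
proof (cases "same_leg k u v")
  case True
  then have "spider_depth k u < spider_depth k v"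
    using assms spider_eqI[of u v] by fastforce
  moreover have "spider_depth k u \<noteq> 0" using True by simp
  ultimately have "spider_depth k (v - k) \<noteq> 0" using spider_depth_parent_Suc[OF assms(1)] by linarith
  then have "v - k \<noteq> 0" by (metis spider_depth_0)
  then show ?thesis
    using True assms(1) \<open>spider_depth k u < spider_depth k v\<close>
      spider_depth_parent_Suc[OF assms(1)] spider_leg_parent[of v]
    by (auto simp: spider_dist_def)
next
  case False
  have "spider_dist k u (v - k) = spider_depth k u + spider_depth k (v - k)"
    using False spider_leg_parent[of v] by (intro spider_dist_other_leg) auto
  moreover have "spider_dist k u v = spider_depth k u + spider_depth k v"
    using False by (intro spider_dist_other_leg) auto
  ultimately show ?thesis using spider_depth_parent_Suc[OF assms(1)] by simp
qed

lemma spider_sym: "spider n k u v \<Longrightarrow> spider n k v u"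
  by (auto simp: spider_def)

lemma spider_parent_edge: "v < n \<Longrightarrow> v \<noteq> 0 \<Longrightarrow> spider n k (v - k) v"
  by (auto simp: spider_def)

lemma spider_dist_edge:
  assumes "spider n k w v"
  shows "spider_dist k w v = 1"
proof -
  consider "v \<noteq> 0" "w = v - k" | "w \<noteq> 0" "v = w - k"
    using assms unfolding spider_def by blast
  then show ?thesis
  proof cases
    case 1
    then show ?thesis using spider_dist_parent_self[of v] by simp
  next
    case 2
    then show ?thesis using spider_dist_parent_self[of w] by (simp add: spider_dist_sym)
  qed
qed

lemma
  assumes "u < n" "v < n"
  shows spider_walk: "(spider n k ^^ spider_dist k u v) u v"
    and gdist_spider: "gdist (spider n k) u v = spider_dist k u v"
proof -
  have descent: "\<exists>w\<in>{..<n}. spider n k w v \<and> spider_dist k u w + 1 = spider_dist k u v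
      \<or> spider n k u w \<and> spider_dist k w v + 1 = spider_dist k u v"
    if "u \<in> {..<n}" "v \<in> {..<n}" "u \<noteq> v" for u v
  proof (cases "spider_depth k u \<le> spider_depth k v")
    case True
    then have "v \<noteq> 0" using that by (metis le_zero_eq spider_depth_0 spider_depth_eq_0_iff)
    then have "spider n k (v - k) v \<and> spider_dist k u (v - k) + 1 = spider_dist k u v"
      using that spider_dist_parent[OF \<open>v \<noteq> 0\<close> True] by (simp add: spider_parent_edge)
    moreover have "v - k \<in> {..<n}" using that by simp
    ultimately show ?thesis by blast
  next
    case False
    then have "u \<noteq> 0" by (metis le0 spider_depth_0)
    then have "spider_dist k v (u - k) + 1 = spider_dist k v u"
      using False that by (intro spider_dist_parent) auto
    then have "spider n k u (u - k) \<and> spider_dist k (u - k) v + 1 = spider_dist k u v"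
      using that \<open>u \<noteq> 0\<close> by (simp add: spider_sym spider_parent_edge spider_dist_sym)
    moreover have "u - k \<in> {..<n}" using that by simp
    ultimately show ?thesis by blast
  qed
  have step: "spider_dist k u v \<le> spider_dist k u w + 1" if "spider n k w v" for u w v
    using spider_dist_triangle[of k u v w] spider_dist_edge[OF that] by simp
  have eq_0: "u = v" if "u \<in> {..<n}" "v \<in> {..<n}" "spider_dist k u v = 0" for u v
    using that(3) by (rule spider_dist_eq_0)
  note spider_gdist = gdist_eqI[where E = "spider n k" and D = "spider_dist k" and V = "{..<n}",
      OF spider_sym spider_dist_self step eq_0 descent]
  show "(spider n k ^^ spider_dist k u v) u v" by (rule spider_gdist(1)) (simp_all add: assms)
  show "gdist (spider n k) u v = spider_dist k u v" by (rule spider_gdist(2)) (simp_all add: assms)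
qed

lemma is_tree_spider: "0 < n \<Longrightarrow> is_tree {..<n} (spider n k)"
  unfolding is_tree_def simple_graph_def connected_graph_def
proof (intro conjI)
  show "\<not> has_cycle (spider n k)"
    by (rule no_cycle_if_parent[of _ "\<lambda>v. v - k"]) (auto simp: spider_def)
  show "\<forall>u. \<not> spider n k u u" using k_pos by (auto simp: spider_def)
qed (use spider_walk in \<open>auto simp: spider_def\<close>)

lemma spider_vertex_lt: "l < k \<Longrightarrow> t * k < n \<Longrightarrow> spider_vertex k l t < n"
  by (cases t) (auto simp: spider_vertex_def)

lemma spider_vertex_parent: "l < k \<Longrightarrow> spider_vertex k l (Suc t) - k = spider_vertex k l t"
  by (cases t) (simp_all add: spider_vertex_def)

lemma spider_vertex_step:
  assumes "l < k" "l' < k" "t * k < n" "t' * k < n" "t' \<le> t + 1" "t \<le> t' + 1" "l = l' \<or> t' = 0"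
  shows "spider_vertex k l' t' = spider_vertex k l t \<or> spider n k (spider_vertex k l t) (spider_vertex k l' t')"
proof -
  consider "t' = t" | "t' = Suc t" | "t = Suc t'" using assms(5,6) by linarith
  then show ?thesis
  proof cases
    case 1
    then show ?thesis using assms(7) by auto
  next
    case 2
    then show ?thesis
      using assms spider_parent_edge[OF spider_vertex_lt[OF assms(2,4)]] spider_vertex_parent[OF assms(2), of t]
      by auto
  next
    case 3
    then have "spider_vertex k l' t' = spider_vertex k l t - k"
      using assms(7) spider_vertex_parent[OF assms(1), of t'] by auto
    then show ?thesis
      using 3 spider_sym[OF spider_parent_edge[OF spider_vertex_lt[OF assms(1,3)]]] by simp
  qed
qed

lemma spider_dist_vertex_other_leg:
  "l < k \<Longrightarrow> spider_leg k c \<noteq> l \<Longrightarrow> spider_dist k c (spider_vertex k l t) = spider_depth k c + t"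
  using spider_dist_other_leg[of c "spider_vertex k l t" k] by (cases "t = 0") auto

lemma spider_dist_vertices:
  "l < k \<Longrightarrow> l' < k \<Longrightarrow> l \<noteq> l' \<Longrightarrow> spider_dist k (spider_vertex k l t) (spider_vertex k l' t') = t + t'"
  using spider_dist_other_leg[of "spider_vertex k l t" "spider_vertex k l' t'" k]
  by (cases "t = 0"; cases "t' = 0") auto

end

section \<open>The twin walk\<close>

lemma potential_reaches_target:
  fixes \<phi> :: "'s \<Rightarrow> nat"
  assumes step: "\<And>j. j < N \<Longrightarrow> I (s j) \<Longrightarrow>
      I (s (Suc j)) \<and> (Q (s j) \<longrightarrow> Q (s (Suc j))) \<and> (\<not> Q (s j) \<longrightarrow> \<phi> (s (Suc j)) < \<phi> (s j))"
    and start: "I (s 0)" "\<phi> (s 0) \<le> N"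
    and pos: "\<And>z. I z \<Longrightarrow> \<not> Q z \<Longrightarrow> 0 < \<phi> z"
  shows "(\<forall>j\<le>N. I (s j)) \<and> Q (s N)"
proof -
  have progress: "I (s j) \<and> (Q (s j) \<or> \<phi> (s j) + j \<le> \<phi> (s 0))" if "j \<le> N" for j
    using that
  proof (induction j)
    case (Suc j)
    then show ?case using step[of j] by fastforce
  qed (simp add: start)
  then have "Q (s N)" using start(2) pos[of "s N"] by fastforce
  with progress show ?thesis by blast
qed

text \<open>
  A pair \<open>(x, y)\<close> holds the depths of the two mice, and \<open>e\<close> is the decrease of the cat's depth.
  Both moves change the pair so that \<open>x\<close> grows by at most \<open>e\<close> iff \<open>y\<close> does, which is all the
  cat's answer reveals; \<open>y\<close> stays within one of \<open>T\<close> while \<open>x\<close> travels.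
\<close>

definition descend :: "nat \<Rightarrow> int \<Rightarrow> nat \<times> nat \<Rightarrow> nat \<times> nat" where
  "descend T e p = (case p of (x, y) \<Rightarrow>
     if x = 0 then (x, y)
     else if e = -1 then (if y = T then (x - 1, y - 1) else (x, y + 1))
     else (x - 1, y))"

definition ascend :: "nat \<Rightarrow> int \<Rightarrow> nat \<times> nat \<Rightarrow> nat \<times> nat" where
  "ascend T e p = (case p of (x, y) \<Rightarrow>
     if x = T then (x, y)
     else if e = 0 then (if y = T then (x, y - 1) else (x + 1, y + 1))
     else (x + 1, y))"

definition same_answer :: "int \<Rightarrow> nat \<times> nat \<Rightarrow> nat \<times> nat \<Rightarrow> bool" where
  "same_answer e p p' \<longleftrightarrow>
     (int (fst p') - int (fst p) \<le> e \<longleftrightarrow> int (snd p') - int (snd p) \<le> e)"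

definition unit_move :: "nat \<times> nat \<Rightarrow> nat \<times> nat \<Rightarrow> bool" where
  "unit_move p p' \<longleftrightarrow> fst p' \<le> fst p + 1 \<and> fst p \<le> fst p' + 1 \<and> snd p' \<le> snd p + 1 \<and> snd p \<le> snd p' + 1"

definition parked :: "nat \<Rightarrow> nat \<times> nat \<Rightarrow> bool" where
  "parked T p \<longleftrightarrow> fst p \<le> T \<and> T - 1 \<le> snd p \<and> snd p \<le> T"

lemma same_answer_depths:
  "same_answer (int s - int s') p p' \<Longrightarrow> s' + fst p' \<le> s + fst p \<longleftrightarrow> s' + snd p' \<le> s + snd p"
  by (simp add: same_answer_def) linarith

lemma same_answer_swap: "same_answer e (prod.swap p) (prod.swap p') = same_answer e p p'"
  by (auto simp: same_answer_def)

lemma unit_move_swap: "unit_move (prod.swap p) (prod.swap p') = unit_move p p'"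
  by (auto simp: unit_move_def)

lemma descend_same_answer: "1 \<le> T \<Longrightarrow> parked T p \<Longrightarrow> same_answer e p (descend T e p)"
  by (cases p) (auto simp: descend_def same_answer_def parked_def)

lemma ascend_same_answer: "same_answer e p (ascend T e p)"
  by (cases p) (auto simp: ascend_def same_answer_def)

lemma descend_unit_move: "unit_move p (descend T e p)"
  by (cases p) (auto simp: descend_def unit_move_def)

lemma ascend_unit_move: "unit_move p (ascend T e p)"
  by (cases p) (auto simp: ascend_def unit_move_def)

lemma parked_swap: "parked T p \<Longrightarrow> fst p = T \<Longrightarrow> parked T (prod.swap p)"
  by (auto simp: parked_def)

lemma descend_reaches_0:
  assumes "1 \<le> T" and steps: "\<And>j. j < 2 * T + 1 \<Longrightarrow> s (Suc j) = descend T (e j) (s j)"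
    and "parked T (s 0)"
  shows "(\<forall>j \<le> 2 * T + 1. parked T (s j)) \<and> fst (s (2 * T + 1)) = 0"
  using assms(1,3)
  by (intro potential_reaches_target[where \<phi> = "\<lambda>p. 2 * fst p + (if snd p = T then 0 else 1)"])
    (auto simp: steps descend_def parked_def split: prod.split)

lemma ascend_reaches_top:
  assumes steps: "\<And>j. j < 2 * T + 1 \<Longrightarrow> s (Suc j) = ascend T (e j) (s j)"
    and "parked T (s 0)"
  shows "(\<forall>j \<le> 2 * T + 1. parked T (s j)) \<and> fst (s (2 * T + 1)) = T"
  using assms(2)
  by (intro potential_reaches_target[where \<phi> = "\<lambda>p. 2 * (T - fst p) + (if snd p = T then 1 else 0)"])
    (auto simp: steps ascend_def parked_def split: prod.split)

text \<open>
  Phases of length \<open>2T + 1\<close> cycle through: the first mouse descends to the centre, ascends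
  back to depth \<open>T\<close>, then the second mouse does the same.
\<close>

definition orient :: "nat \<Rightarrow> nat \<times> nat \<Rightarrow> nat \<times> nat" where
  "orient q p = (if even (q div 2) then p else prod.swap p)"

definition twin_step :: "nat \<Rightarrow> nat \<Rightarrow> int \<Rightarrow> nat \<times> nat \<Rightarrow> nat \<times> nat" where
  "twin_step T q e p = orient q ((if even q then descend T e else ascend T e) (orient q p))"

lemma orient_orient [simp]: "orient q (orient q p) = p"
  by (simp add: orient_def)

lemma orient_Suc: "orient (Suc q) p = (if even q then orient q p else prod.swap (orient q p))"
  by (auto simp: orient_def elim!: evenE oddE)

lemma same_answer_orient: "same_answer e (orient q p) (orient q p') = same_answer e p p'"
  by (simp add: orient_def same_answer_swap)

lemma unit_move_orient: "unit_move (orient q p) (orient q p') = unit_move p p'"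
  by (simp add: orient_def unit_move_swap)

lemma parked_bounds_orient:
  "parked T (orient q p) \<Longrightarrow> fst p \<le> T \<and> snd p \<le> T \<and> T - 1 \<le> fst p + snd p"
  by (auto simp: orient_def parked_def split: if_splits)

locale twin_walk =
  fixes T :: nat and e :: "nat \<Rightarrow> int" and W :: "nat \<Rightarrow> nat \<times> nat"
  assumes T_pos: "1 \<le> T"
    and W_0: "W 0 = (T, T)"
    and W_Suc: "\<And>i. W (Suc i) = twin_step T (i div (2 * T + 1)) (e i) (W i)"
begin

abbreviation P :: nat where "P \<equiv> 2 * T + 1"

lemma W_Suc_in_phase:
  assumes "j < P"
  shows "W (P * q + Suc j) = twin_step T q (e (P * q + j)) (W (P * q + j))"
proof -
  have "(P * q + j) div P = q"
    using div_mult_self2[of P j q] assms by (simp only: add.commute div_less)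
  then show ?thesis using W_Suc[of "P * q + j"] by simp
qed

lemma phase_block:
  assumes "parked T (orient q (W (P * q)))"
  shows "j \<le> P \<Longrightarrow> parked T (orient q (W (P * q + j)))"
    and "fst (orient q (W (P * Suc q))) = (if even q then 0 else T)"
proof -
  define s where "s j = orient q (W (P * q + j))" for j
  have "s (Suc j) = (if even q then descend T (e (P * q + j)) else ascend T (e (P * q + j))) (s j)"
    if "j < P" for j
    using W_Suc_in_phase[OF that] by (simp add: s_def twin_step_def)
  then have "(\<forall>j \<le> P. parked T (s j)) \<and> fst (s P) = (if even q then 0 else T)"
    using descend_reaches_0[OF T_pos, where s = s and e = "\<lambda>j. e (P * q + j)"]
      ascend_reaches_top[where s = s and e = "\<lambda>j. e (P * q + j)"] assms
    unfolding s_def by (cases "even q") auto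
  then show "j \<le> P \<Longrightarrow> parked T (orient q (W (P * q + j)))"
    and "fst (orient q (W (P * Suc q))) = (if even q then 0 else T)"
    unfolding s_def by (simp_all add: add.commute)
qed

lemma parked_at_phase_start: "parked T (orient q (W (P * q)))"
proof (induction q)
  case 0
  then show ?case using T_pos by (simp add: W_0 orient_def parked_def)
next
  case (Suc q)
  have "parked T (orient q (W (P * Suc q)))"
    using phase_block(1)[OF Suc.IH, of P] by (simp add: add.commute)
  then show ?case
    using phase_block(2)[OF Suc.IH] by (cases "even q") (simp_all add: orient_Suc parked_swap)
qed

lemma parked_oriented: "parked T (orient (i div P) (W i))"
  using phase_block(1)[OF parked_at_phase_start, of "i mod P" "i div P"] div_mult_mod_eq[of i P]
  by (simp add: mult.commute)

lemma twin_walk_bounds: "fst (W i) \<le> T \<and> snd (W i) \<le> T \<and> T - 1 \<le> fst (W i) + snd (W i)"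
  using parked_oriented by (rule parked_bounds_orient)

lemma twin_walk_fst_0: "fst (W (P * (4 * m + 1))) = 0"
  using phase_block(2)[OF parked_at_phase_start, of "4 * m"] by (simp add: orient_def algebra_simps)

lemma twin_walk_snd_0: "snd (W (P * (4 * m + 3))) = 0"
  using phase_block(2)[OF parked_at_phase_start, of "4 * m + 2"]
  by (simp add: orient_def algebra_simps numeral_3_eq_3)

lemma twin_walk_same_answer: "same_answer (e i) (W i) (W (Suc i))"
proof -
  have "same_answer (e i) (orient (i div P) (W i)) (orient (i div P) (W (Suc i)))"
    using parked_oriented[of i] T_pos
    by (simp add: W_Suc twin_step_def descend_same_answer ascend_same_answer)
  then show ?thesis by (simp only: same_answer_orient)
qed

lemma twin_walk_unit_move: "unit_move (W i) (W (Suc i))"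
proof -
  have "unit_move (orient (i div P) (W i)) (orient (i div P) (W (Suc i)))"
    by (simp add: W_Suc twin_step_def descend_unit_move ascend_unit_move)
  then show ?thesis by (simp only: unit_move_orient)
qed

end

section \<open>The mouse strategy\<close>

lemma card_div_fiber_le:
  fixes c M w :: nat
  assumes "0 < M"
  shows "finite {i. (i + c) div M = w}" and "card {i. (i + c) div M = w} \<le> M"
proof -
  have fiber: "{i. (i + c) div M = w} \<subseteq> (\<lambda>x. x - c) ` {M * w..<M * w + M}"
  proof
    fix i assume "i \<in> {i. (i + c) div M = w}"
    then have "i + c \<in> {M * w..<M * w + M}"
      using div_times_less_eq_dividend[of "i + c" M] dividend_less_div_times[OF assms, of "i + c"]
      by (auto simp: mult.commute)
    then show "i \<in> (\<lambda>x. x - c) ` {M * w..<M * w + M}" by force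
  qed
  then show "finite {i. (i + c) div M = w}" by (rule finite_subset) simp
  have "card {i. (i + c) div M = w} \<le> card ((\<lambda>x. x - c) ` {M * w..<M * w + M})"
    using fiber by (rule card_mono[rotated]) simp
  also have "\<dots> \<le> M" using card_image_le[of "{M * w..<M * w + M}" "\<lambda>x. x - c"] by simp
  finally show "card {i. (i + c) div M = w} \<le> M" .
qed

lemma dvd_if_Suc_div_change:
  fixes x M :: nat
  assumes "Suc x div M \<noteq> x div M"
  shows "M dvd Suc x"
  using assms div_Suc[of x M] by (auto split: if_splits)

locale spider_game =
  fixes n K T c1 c2 :: nat and f :: "bool list \<Rightarrow> nat"
  assumes T_pos: "1 \<le> T"
    and many_legs: "4 * (2 * T + 1) < K"
    and long_legs: "T * (2 * K) < n"
    and c1_lt: "c1 < n" and c2_lt: "c2 < n" and f_lt: "\<And>h. f h < n"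
begin

abbreviation k :: nat where "k \<equiv> 2 * K"

lemma k_pos: "0 < k"
  using many_legs by simp

text \<open>
  Since the answers only depend on depths, the whole game can be simulated in advance from the
  depths alone: \<open>W i\<close> are the depths, \<open>C i\<close> the cat's test and \<open>H i\<close> the answers at time \<open>i + 1\<close>.
  The legs are chosen afterwards, knowing all future tests.
\<close>

primrec play :: "nat \<Rightarrow> (nat \<times> nat) \<times> bool list \<times> nat" where
  "play 0 = ((T, T), [], c1)"
| "play (Suc i) = (case play i of (p, h, c) \<Rightarrow>
     let c' = cat_at c1 c2 f (i + 2) h;
         p' = twin_step T (i div (2 * T + 1)) (int (spider_depth k c) - int (spider_depth k c')) p
     in (p', h @ [spider_depth k c' + fst p' \<le> spider_depth k c + fst p], c'))"

definition W :: "nat \<Rightarrow> nat \<times> nat" where "W i = fst (play i)"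
definition H :: "nat \<Rightarrow> bool list" where "H i = fst (snd (play i))"
definition C :: "nat \<Rightarrow> nat" where "C i = snd (snd (play i))"

lemma play_0: "W 0 = (T, T)" "H 0 = []" "C 0 = c1"
  by (simp_all add: W_def H_def C_def)

lemma play_Suc:
  "C (Suc i) = cat_at c1 c2 f (i + 2) (H i)"
  "W (Suc i) = twin_step T (i div (2 * T + 1))
     (int (spider_depth k (C i)) - int (spider_depth k (C (Suc i)))) (W i)"
  "H (Suc i) = H i @ [spider_depth k (C (Suc i)) + fst (W (Suc i)) \<le> spider_depth k (C i) + fst (W i)]"
  by (simp_all add: W_def H_def C_def Let_def split: prod.split)

sublocale twin_walk T "\<lambda>i. int (spider_depth k (C i)) - int (spider_depth k (C (Suc i)))" W
  using T_pos by unfold_locales (simp_all add: play_0 play_Suc(2))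

lemma C_lt: "C i < n"
  using c1_lt c2_lt f_lt by (cases i) (simp_all add: play_0 play_Suc(1) cat_at_def)

text \<open>
  \<open>window 3\<close> changes exactly at the times \<open>(2T + 1)(4m + 1)\<close>, when the first mouse is at the
  centre, and \<open>window 1\<close> at the times \<open>(2T + 1)(4m + 3)\<close>, when the second one is.
\<close>

definition window :: "nat \<Rightarrow> nat \<Rightarrow> nat" where
  "window c i = (i + c * P) div (4 * P)"

definition free_leg :: "nat set \<Rightarrow> nat \<Rightarrow> nat \<Rightarrow> nat" where
  "free_leg L c w = (SOME l. l \<in> L \<and> l \<notin> (\<lambda>i. spider_leg k (C i)) ` {i. window c i = w})"

lemma free_leg_spec:
  assumes "finite L" "4 * P < card L"
  shows "free_leg L c w \<in> L" and "window c i = w \<Longrightarrow> spider_leg k (C i) \<noteq> free_leg L c w"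
proof -
  let ?I = "{i. window c i = w}"
  let ?S = "(\<lambda>i. spider_leg k (C i)) ` ?I"
  have "finite ?I" "card ?I \<le> 4 * P"
    unfolding window_def using card_div_fiber_le[of "4 * P" "c * P" w] by simp_all
  then have "finite ?S" "card ?S < card L"
    using card_image_le[of ?I "\<lambda>i. spider_leg k (C i)"] assms(2) by simp_all
  then have "\<not> L \<subseteq> ?S" using card_mono[of ?S L] by linarith
  then have "\<exists>l. l \<in> L \<and> l \<notin> ?S" by blast
  then have "free_leg L c w \<in> L \<and> free_leg L c w \<notin> ?S"
    unfolding free_leg_def by (rule someI_ex)
  then show "free_leg L c w \<in> L" and "window c i = w \<Longrightarrow> spider_leg k (C i) \<noteq> free_leg L c w"
    by (auto simp: image_iff)
qed

end

locale spider_runner = spider_game +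
  fixes L :: "nat set" and c :: nat and d :: "nat \<Rightarrow> nat"
  assumes legs: "L \<subseteq> {..<2 * K}" "4 * (2 * T + 1) < card L"
    and depth_le: "\<And>i. d i \<le> T"
    and depth_unit_step: "\<And>i. d (Suc i) \<le> d i + 1 \<and> d i \<le> d (Suc i) + 1"
    and centre_at_new_window: "\<And>i. window c (Suc i) \<noteq> window c i \<Longrightarrow> d (Suc i) = 0"
begin

text \<open>Game time \<open>i \<ge> 1\<close> corresponds to index \<open>i - 1\<close> of the simulated play.\<close>

definition pos :: "nat \<Rightarrow> nat" where
  "pos i = spider_vertex k (free_leg L c (window c (i - 1))) (d (i - 1))"

lemma free_leg_lt: "free_leg L c w < k"
  using free_leg_spec(1)[of L] legs finite_subset[OF legs(1)] by auto

lemma depth_lt: "d i * k < n"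
  using depth_le[of i] long_legs by (meson le_less_trans mult_le_mono1)

lemma pos_lt: "pos i < n"
  unfolding pos_def using spider_vertex_lt[OF k_pos free_leg_lt depth_lt] .

lemma mouse_seq_pos: "mouse_seq {..<n} (spider n k) pos"
  unfolding mouse_seq_def
proof (intro conjI allI impI)
  fix i :: nat
  show "pos i \<in> {..<n}" using pos_lt by simp
  assume "2 \<le> i"
  then obtain j where i: "i = Suc (Suc j)" by (metis add_2_eq_Suc le_Suc_ex)
  have "free_leg L c (window c j) = free_leg L c (window c (Suc j)) \<or> d (Suc j) = 0"
    using centre_at_new_window[of j] by metis
  then show "pos i = pos (i - 1) \<or> spider n k (pos (i - 1)) (pos i)"
    unfolding i pos_def
    using spider_vertex_step[OF k_pos free_leg_lt free_leg_lt depth_lt depth_lt] depth_unit_step[of j]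
    by simp
qed

lemma gdist_cat_pos: "gdist (spider n k) (C i) (pos (Suc i)) = spider_depth k (C i) + d i"
  unfolding pos_def
  using gdist_spider[OF k_pos C_lt spider_vertex_lt[OF k_pos free_leg_lt depth_lt]]
    spider_dist_vertex_other_leg[OF k_pos free_leg_lt free_leg_spec(2)] legs finite_subset[OF legs(1)]
  by simp

end

context spider_game
begin

lemma fst_W_at_new_window:
  assumes "window 3 (Suc i) \<noteq> window 3 i"
  shows "fst (W (Suc i)) = 0"
proof -
  have "4 * P dvd Suc i + 3 * P"
    using dvd_if_Suc_div_change[of "i + 3 * P" "4 * P"] assms unfolding window_def by simp
  then obtain q where q: "Suc i + 3 * P = 4 * P * q" by blast
  then obtain m where "q = Suc m" by (cases q) auto
  with q have "Suc i = P * (4 * m + 1)" by (simp add: algebra_simps)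
  then show ?thesis by (metis twin_walk_fst_0)
qed

lemma snd_W_at_new_window:
  assumes "window 1 (Suc i) \<noteq> window 1 i"
  shows "snd (W (Suc i)) = 0"
proof -
  have "4 * P dvd Suc i + P"
    using dvd_if_Suc_div_change[of "i + P" "4 * P"] assms unfolding window_def by simp
  then obtain q where q: "Suc i + P = 4 * P * q" by blast
  then obtain m where "q = Suc m" by (cases q) auto
  with q have "Suc i = P * (4 * m + 3)" by (simp add: algebra_simps)
  then show ?thesis by (metis twin_walk_snd_0)
qed

interpretation mouse: spider_runner n K T c1 c2 f "{..<K}" 3 "\<lambda>i. fst (W i)"
  by unfold_locales
    (use many_legs twin_walk_bounds twin_walk_unit_move fst_W_at_new_window in \<open>auto simp: unit_move_def\<close>)

interpretation phantom: spider_runner n K T c1 c2 f "{K..<2 * K}" 1 "\<lambda>i. snd (W i)"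
  by unfold_locales
    (use many_legs twin_walk_bounds twin_walk_unit_move snd_W_at_new_window in \<open>auto simp: unit_move_def\<close>)

lemma hist_mouse:
  "hist (spider n k) c1 c2 f mouse.pos (Suc i) = H i
   \<and> cat_at c1 c2 f (Suc i) (hist (spider n k) c1 c2 f mouse.pos i) = C i"
proof (induction i)
  case 0
  then show ?case by (simp add: play_0 cat_at_def)
next
  case (Suc i)
  have cat: "cat_at c1 c2 f (Suc (Suc i)) (hist (spider n k) c1 c2 f mouse.pos (Suc i)) = C (Suc i)"
    using Suc.IH by (simp add: play_Suc(1))
  have "hist (spider n k) c1 c2 f mouse.pos (Suc (Suc i)) = H i @
      [gdist (spider n k) (C (Suc i)) (mouse.pos (Suc (Suc i))) \<le> gdist (spider n k) (C i) (mouse.pos (Suc i))]"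
    using Suc.IH cat by simp
  also have "\<dots> = H (Suc i)" by (simp add: mouse.gdist_cat_pos play_Suc(3))
  finally show ?case using cat by simp
qed

lemma catpos_mouse: "catpos (spider n k) c1 c2 f mouse.pos (Suc i) = C i"
  using hist_mouse by (simp add: catpos_def)

lemma answer_mouse:
  "answer (spider n k) c1 c2 f mouse.pos (Suc (Suc i))
     \<longleftrightarrow> spider_depth k (C (Suc i)) + fst (W (Suc i)) \<le> spider_depth k (C i) + fst (W i)"
  using catpos_mouse[of i] catpos_mouse[of "Suc i"] mouse.gdist_cat_pos[of i] mouse.gdist_cat_pos[of "Suc i"]
  by (simp add: answer_def)

lemma mouse_in_Mset: "mouse.pos i \<in> Mset {..<n} (spider n k) c1 c2 f mouse.pos i"
  by (rule Mset_memI[OF mouse.mouse_seq_pos]) (simp add: answer_def)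

lemma phantom_in_Mset: "phantom.pos i \<in> Mset {..<n} (spider n k) c1 c2 f mouse.pos i"
proof (rule Mset_memI[OF phantom.mouse_seq_pos])
  fix j :: nat assume "2 \<le> j"
  then obtain i where j: "j = Suc (Suc i)" by (metis add_2_eq_Suc le_Suc_ex)
  show "(gdist (spider n k) (catpos (spider n k) c1 c2 f mouse.pos j) (phantom.pos j)
      \<le> gdist (spider n k) (catpos (spider n k) c1 c2 f mouse.pos (j - 1)) (phantom.pos (j - 1)))
    = answer (spider n k) c1 c2 f mouse.pos j"
    unfolding j answer_mouse
    using catpos_mouse[of i] catpos_mouse[of "Suc i"] phantom.gdist_cat_pos[of i]
      phantom.gdist_cat_pos[of "Suc i"] same_answer_depths[OF twin_walk_same_answer[of i]]
    by simp
qed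

lemma mice_apart: "T - 1 \<le> spider_dist k (mouse.pos i) (phantom.pos i)"
proof -
  have "free_leg {..<K} 3 w < K" "K \<le> free_leg {K..<2 * K} 1 w'" for w w'
    using mouse.legs phantom.legs free_leg_spec(1)[of "{..<K}"] free_leg_spec(1)[of "{K..<2 * K}"] by auto
  then show ?thesis
    unfolding mouse.pos_def phantom.pos_def
    using spider_dist_vertices[OF k_pos mouse.free_leg_lt phantom.free_leg_lt] twin_walk_bounds
    by (metis less_le_trans less_irrefl)
qed

lemma mouse_escapes:
  "\<exists>m. mouse_seq {..<n} (spider n k) m
     \<and> (\<forall>i\<ge>1. T - 1 \<le> 2 * grad {..<n} (spider n k) (Mset {..<n} (spider n k) c1 c2 f m i))"
proof (intro exI conjI allI impI)
  show "mouse_seq {..<n} (spider n k) mouse.pos" by (rule mouse.mouse_seq_pos)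
  fix i :: nat assume "1 \<le> i"
  show "T - 1 \<le> 2 * grad {..<n} (spider n k) (Mset {..<n} (spider n k) c1 c2 f mouse.pos i)"
  proof (rule grad_lower_bound[OF _ _ Mset_subset[OF \<open>1 \<le> i\<close>] mouse_in_Mset phantom_in_Mset])
    show "{..<n} \<noteq> {}" using C_lt by auto
    fix v assume "v \<in> {..<n}"
    then show "T - 1 \<le> gdist (spider n k) v (mouse.pos i) + gdist (spider n k) v (phantom.pos i)"
      using mice_apart[of i] spider_dist_triangle[of k "mouse.pos i" "phantom.pos i" v]
        gdist_spider[OF k_pos _ mouse.pos_lt] gdist_spider[OF k_pos _ phantom.pos_lt]
        spider_dist_sym[of k "mouse.pos i" v]
      by simp
  qed simp
qed

end

section \<open>Choice of parameters\<close>

lemma spider_parameters: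
  fixes n :: nat
  assumes "900 \<le> n"
  obtains T K where "1 \<le> T" "4 * (2 * T + 1) < K" "T * (2 * K) < n"
    and "sqrt (real n) / 12 < (real T - 1) / 2"
proof -
  define s where "s = nat \<lfloor>sqrt (real n)\<rfloor>"
  have s_le: "real s \<le> sqrt (real n)" and s_gt: "sqrt (real n) < real s + 1"
    unfolding s_def by simp_all
  have "30 \<le> sqrt (real n)" using assms by (intro real_le_rsqrt) simp
  then have s_ge: "30 \<le> s" unfolding s_def by linarith
  have "real s * real s \<le> sqrt (real n) * sqrt (real n)"
    using mult_mono[OF s_le s_le] by simp
  then have "real (s * s) \<le> real n" by simp
  then have s_sq: "s * s \<le> n" by (simp only: of_nat_le_iff)
  define T where "T = s div 6 + 2"
  define K where "K = 8 * T + 5"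
  have "6 * T \<le> s + 12" unfolding T_def by simp
  have "36 * (T * (2 * K)) = 6 * T * (96 * T + 60)"
    unfolding K_def by (simp add: algebra_simps)
  also have "\<dots> \<le> (s + 12) * (16 * s + 252)"
    using \<open>6 * T \<le> s + 12\<close> by (intro mult_mono) auto
  also have "\<dots> = 16 * (s * s) + 444 * s + 3024" by (simp add: algebra_simps)
  also have "\<dots> < 36 * (s * s)" using s_ge mult_le_mono1[OF s_ge, of s] by linarith
  finally have "T * (2 * K) < n" using s_sq by (simp add: mult.commute mult.left_commute)
  moreover have "sqrt (real n) / 12 < (real T - 1) / 2"
  proof -
    have "s + 1 \<le> 6 * (s div 6) + 6" by linarith
    then have "real (s + 1) \<le> real (6 * (s div 6) + 6)" by (simp only: of_nat_le_iff)
    then show ?thesis using s_gt unfolding T_def by simp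
  qed
  moreover have "1 \<le> T" "4 * (2 * T + 1) < K" unfolding T_def K_def by simp_all
  ultimately show ?thesis using that by blast
qed

lemma cat_loses_on_spider:
  assumes "1 \<le> T" "4 * (2 * T + 1) < K" "T * (2 * K) < n" "r < (real T - 1) / 2"
  shows "\<exists>E :: nat \<Rightarrow> nat \<Rightarrow> bool. is_tree {..<n} E \<and>
    (\<forall>c1 c2 (f :: bool list \<Rightarrow> nat). c1 \<in> {..<n} \<and> c2 \<in> {..<n} \<and> (\<forall>h. f h \<in> {..<n}) \<longrightarrow>
       (\<exists>m. mouse_seq {..<n} E m \<and> (\<forall>i\<ge>1. real (grad {..<n} E (Mset {..<n} E c1 c2 f m i)) > r)))"
proof (intro exI[of _ "spider n (2 * K)"] conjI allI impI)
  show "is_tree {..<n} (spider n (2 * K))" using assms by (intro is_tree_spider) auto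
  fix c1 c2 :: nat and f :: "bool list \<Rightarrow> nat"
  assume "c1 \<in> {..<n} \<and> c2 \<in> {..<n} \<and> (\<forall>h. f h \<in> {..<n})"
  then interpret spider_game n K T c1 c2 f
    using assms by unfold_locales auto
  obtain m where "mouse_seq {..<n} (spider n (2 * K)) m"
    and "\<forall>i\<ge>1. T - 1 \<le> 2 * grad {..<n} (spider n (2 * K)) (Mset {..<n} (spider n (2 * K)) c1 c2 f m i)"
    using mouse_escapes by blast
  then show "\<exists>m. mouse_seq {..<n} (spider n (2 * K)) m \<and>
      (\<forall>i\<ge>1. real (grad {..<n} (spider n (2 * K)) (Mset {..<n} (spider n (2 * K)) c1 c2 f m i)) > r)"
    using assms(1,4) by (intro exI[of _ m]) force
qed

theorem theorem1p2:
  shows "\<exists>N::nat. \<forall>n\<ge>N. \<exists>E :: nat \<Rightarrow> nat \<Rightarrow> bool. is_tree {..<n} E \<and>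
    (\<forall>c1 c2 (f :: bool list \<Rightarrow> nat). c1 \<in> {..<n} \<and> c2 \<in> {..<n} \<and> (\<forall>h. f h \<in> {..<n}) \<longrightarrow>
       (\<exists>m. mouse_seq {..<n} E m \<and>
          (\<forall>i\<ge>1. real (grad {..<n} E (Mset {..<n} E c1 c2 f m i)) > sqrt (real n) / 12)))"
  using spider_parameters cat_loses_on_spider by metis

end
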